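(* Let $\mathcal A$ be a Scott continuous, naturally ordered, partial semiring. For any family $(f_i:X\to\mathcal W(Y))_{i\in I}$ of Scott continuous functions and any directed set $D\subseteq X$, \[\sup_{x\in D}\sum_{i\in I}f_i(x)=\sum_{i\in I}f_i(\sup D).\]
   Context: A partial semiring $\mathcal A=\langle U,+,\cdot,\mathbf 0,\mathbf 1\rangle$: $\langle U,+,\mathbf 0\rangle$ is a commutative monoid with $+$ possibly partial, $\langle U,\cdot,\mathbf 1\rangle$ a monoid with total $\cdot$, two-sided distributivity, $\mathbf 0$ annihilates. Natural order: $u\le v$ iff $u+w=v$ for some $w$; naturally ordered means this is a partial order. Scott continuous: for every directed $D\subseteq U$ and $y\in U$, $\sup_{x\in D}(x+y)=(\sup D)+y$, $\sup_{x\in D}(x\cdot y)=(\sup D)\cdot y$, $\sup_{x\in D}(y\cdot x)=y\cdot\sup D$. Standing assumption: $\mathcal A$ has a top element. $\sum_{i\in I}u_i$ is the supremum of all finite sums over finite subsets of $I$. $\mathcal W(Y)$ is the set of $m:Y\to U$ with countable support $\{y:m(y)\ne\mathbf 0\}$ and defined mass $\sum_{y\in\mathrm{supp}(m)}m(y)$; sums of weighting functions are pointwise, and $\mathcal W(Y)$ is ordered by $m_1\sqsubseteq m_2$ iff $m_1+m=m_2$ for some $m$. $X$ is a partially ordered set in which the suprema considered exist; a function is Scott continuous if it preserves suprema of directed sets. *)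

theory Defs
  imports Main "HOL-Library.Countable_Set"
begin

text \<open>A partial semiring on the carrier UNIV of type 'a: partial addition
  add (None = undefined), total multiplication mul, zero z, one e.\<close>

definition addopt :: "('a \<Rightarrow> 'a \<Rightarrow> 'a option) \<Rightarrow> 'a option \<Rightarrow> 'a option \<Rightarrow> 'a option" where
  "addopt add a b = (case (a, b) of (Some x, Some y) \<Rightarrow> add x y | _ \<Rightarrow> None)"

definition partial_semiring ::
  "('a \<Rightarrow> 'a \<Rightarrow> 'a option) \<Rightarrow> ('a \<Rightarrow> 'a \<Rightarrow> 'a) \<Rightarrow> 'a \<Rightarrow> 'a \<Rightarrow> bool" where
  "partial_semiring add mul z e \<longleftrightarrow>
     (\<forall>u v. add u v = add v u) \<and>
     (\<forall>u v w. addopt add (add u v) (Some w) = addopt add (Some u) (add v w)) \<and>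
     (\<forall>u. add z u = Some u) \<and>
     (\<forall>u v w. mul (mul u v) w = mul u (mul v w)) \<and>
     (\<forall>u. mul e u = u \<and> mul u e = u) \<and>
     (\<forall>u v w s. add u v = Some s \<longrightarrow>
        add (mul w u) (mul w v) = Some (mul w s) \<and> add (mul u w) (mul v w) = Some (mul s w)) \<and>
     (\<forall>u. mul z u = z \<and> mul u z = z)"

definition nat_le :: "('a \<Rightarrow> 'a \<Rightarrow> 'a option) \<Rightarrow> 'a \<Rightarrow> 'a \<Rightarrow> bool" where
  "nat_le add u v \<longleftrightarrow> (\<exists>w. add u w = Some v)"

definition naturally_ordered :: "('a \<Rightarrow> 'a \<Rightarrow> 'a option) \<Rightarrow> bool" where
  "naturally_ordered add \<longleftrightarrow> partial_order_on UNIV {(u, v). nat_le add u v}"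

definition has_top :: "('a \<Rightarrow> 'a \<Rightarrow> 'a option) \<Rightarrow> bool" where
  "has_top add \<longleftrightarrow> (\<exists>t. \<forall>u. nat_le add u t)"

definition directed_set :: "('b \<Rightarrow> 'b \<Rightarrow> bool) \<Rightarrow> 'b set \<Rightarrow> bool" where
  "directed_set le D \<longleftrightarrow> D \<noteq> {} \<and> (\<forall>a\<in>D. \<forall>b\<in>D. \<exists>c\<in>D. le a c \<and> le b c)"

definition is_lub_on :: "'b set \<Rightarrow> ('b \<Rightarrow> 'b \<Rightarrow> bool) \<Rightarrow> 'b set \<Rightarrow> 'b \<Rightarrow> bool" where
  "is_lub_on C le A s \<longleftrightarrow> s \<in> C \<and> (\<forall>a\<in>A. le a s) \<and> (\<forall>u\<in>C. (\<forall>a\<in>A. le a u) \<longrightarrow> le s u)"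

text \<open>Scott continuity of the partial semiring: directed sets have suprema, and
  addition / multiplication preserve them (addition in the Kleene sense).\<close>
definition scott_continuous_sr ::
  "('a \<Rightarrow> 'a \<Rightarrow> 'a option) \<Rightarrow> ('a \<Rightarrow> 'a \<Rightarrow> 'a) \<Rightarrow> bool" where
  "scott_continuous_sr add mul \<longleftrightarrow>
     (\<forall>D. directed_set (nat_le add) D \<longrightarrow> (\<exists>s. is_lub_on UNIV (nat_le add) D s)) \<and>
     (\<forall>D s y. directed_set (nat_le add) D \<and> is_lub_on UNIV (nat_le add) D s \<longrightarrow>
        (add s y \<noteq> None \<longleftrightarrow> (\<forall>x\<in>D. add x y \<noteq> None)) \<and>
        (\<forall>t. add s y = Some t \<longrightarrow>
               is_lub_on UNIV (nat_le add) {the (add x y) | x. x \<in> D} t) \<and>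
        is_lub_on UNIV (nat_le add) ((\<lambda>x. mul x y) ` D) (mul s y) \<and>
        is_lub_on UNIV (nat_le add) ((\<lambda>x. mul y x) ` D) (mul y s))"

inductive has_fsum :: "('b \<Rightarrow> 'b \<Rightarrow> 'b option) \<Rightarrow> 'b \<Rightarrow> ('i \<Rightarrow> 'b) \<Rightarrow> 'i set \<Rightarrow> 'b \<Rightarrow> bool"
  for add z g where
  fsum_empty: "has_fsum add z g {} z"
| fsum_insert: "has_fsum add z g F s \<Longrightarrow> i \<notin> F \<Longrightarrow> add s (g i) = Some t
                 \<Longrightarrow> has_fsum add z g (insert i F) t"

definition has_psum ::
  "'b set \<Rightarrow> ('b \<Rightarrow> 'b \<Rightarrow> bool) \<Rightarrow> ('b \<Rightarrow> 'b \<Rightarrow> 'b option) \<Rightarrow> 'b \<Rightarrow> ('i \<Rightarrow> 'b) \<Rightarrow> 'i set \<Rightarrow> 'b \<Rightarrow> bool" where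
  "has_psum C le add z g I s \<longleftrightarrow>
     (\<forall>F. finite F \<and> F \<subseteq> I \<longrightarrow> (\<exists>t. has_fsum add z g F t)) \<and>
     is_lub_on C le {t. \<exists>F. finite F \<and> F \<subseteq> I \<and> has_fsum add z g F t} s"

definition supp_w :: "'a \<Rightarrow> ('y \<Rightarrow> 'a) \<Rightarrow> 'y set" where
  "supp_w z m = {y. m y \<noteq> z}"

definition Wset :: "('a \<Rightarrow> 'a \<Rightarrow> 'a option) \<Rightarrow> 'a \<Rightarrow> ('y \<Rightarrow> 'a) set" where
  "Wset add z = {m. countable (supp_w z m) \<and>
                    (\<exists>s. has_psum UNIV (nat_le add) add z m (supp_w z m) s)}"

definition addW :: "('a \<Rightarrow> 'a \<Rightarrow> 'a option) \<Rightarrow> 'a \<Rightarrow> ('y \<Rightarrow> 'a) \<Rightarrow> ('y \<Rightarrow> 'a) \<Rightarrow> ('y \<Rightarrow> 'a) option" where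
  "addW add z m1 m2 =
     (if m1 \<in> Wset add z \<and> m2 \<in> Wset add z \<and> (\<forall>y. add (m1 y) (m2 y) \<noteq> None)
         \<and> (\<lambda>y. the (add (m1 y) (m2 y))) \<in> Wset add z
      then Some (\<lambda>y. the (add (m1 y) (m2 y))) else None)"

definition zeroW :: "'a \<Rightarrow> 'y \<Rightarrow> 'a" where
  "zeroW z = (\<lambda>_. z)"

definition leW :: "('a \<Rightarrow> 'a \<Rightarrow> 'a option) \<Rightarrow> 'a \<Rightarrow> ('y \<Rightarrow> 'a) \<Rightarrow> ('y \<Rightarrow> 'a) \<Rightarrow> bool" where
  "leW add z = nat_le (addW add z)"

definition has_sumW :: "('a \<Rightarrow> 'a \<Rightarrow> 'a option) \<Rightarrow> 'a \<Rightarrow> ('i \<Rightarrow> 'y \<Rightarrow> 'a) \<Rightarrow> 'i set \<Rightarrow> ('y \<Rightarrow> 'a) \<Rightarrow> bool" where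
  "has_sumW add z g I m = has_psum (Wset add z) (leW add z) (addW add z) (zeroW z) g I m"

definition scott_cont_W :: "('a \<Rightarrow> 'a \<Rightarrow> 'a option) \<Rightarrow> 'a \<Rightarrow> ('x::order \<Rightarrow> 'y \<Rightarrow> 'a) \<Rightarrow> bool" where
  "scott_cont_W add z f \<longleftrightarrow>
     (\<forall>x. f x \<in> Wset add z) \<and>
     (\<forall>D s. directed_set (\<le>) D \<and> is_lub_on UNIV (\<le>) D s \<longrightarrow>
        is_lub_on (Wset add z) (leW add z) (f ` D) (f s))"

end

theory Submission
  imports Defs
begin

(* Only the additive structure of the semiring matters.  Weighting functions are ordered
   pointwise and W(Y) is closed downwards, so finite sums, infinite sums and suprema of
   directed families in W(Y) are all computed pointwise; this reduces the claim to a single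
   coordinate y.  There, Scott continuity of addition in each argument gives joint continuity
   along a directed set, because the diagonal of D x D is cofinal; by induction, finite sums
   commute with directed suprema.  Finally, both sides of the identity are suprema of the same
   doubly indexed family of finite partial sums sum_{i in F} f_i(x) (F finite, x in D), the
   suprema being taken in the two possible orders. *)

section \<open>Directed sets and least upper bounds\<close>

lemma directed_set_image_monotone:
  assumes "directed_set R D" and "monotone_on D R Q h"
  shows "directed_set Q (h ` D)"
  unfolding directed_set_def
proof (intro conjI ballI)
  show "h ` D \<noteq> {}"
    using assms(1) unfolding directed_set_def by blast
  fix u v
  assume "u \<in> h ` D" and "v \<in> h ` D"
  then obtain x x' where "x \<in> D" "x' \<in> D" "u = h x" "v = h x'"
    by blast
  moreover obtain x'' where "x'' \<in> D" "R x x''" "R x' x''"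
    using assms(1) \<open>x \<in> D\<close> \<open>x' \<in> D\<close> unfolding directed_set_def by blast
  ultimately show "\<exists>c\<in>h ` D. Q u c \<and> Q v c"
    using assms(2) unfolding monotone_on_def by blast
qed

lemma is_lub_on_upper: "is_lub_on C le A s \<Longrightarrow> a \<in> A \<Longrightarrow> le a s"
  unfolding is_lub_on_def by blast

lemma is_lub_on_least:
  "is_lub_on C le A s \<Longrightarrow> u \<in> C \<Longrightarrow> (\<And>a. a \<in> A \<Longrightarrow> le a u) \<Longrightarrow> le s u"
  unfolding is_lub_on_def by blast

lemma is_lub_on_Union_iff:
  assumes trans: "\<And>a b c. le a b \<Longrightarrow> le b c \<Longrightarrow> le a c"
    and lub_of_member: "\<And>b. b \<in> B \<Longrightarrow> \<exists>A\<in>\<A>. is_lub_on C le A b"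
    and member_lub: "\<And>A. A \<in> \<A> \<Longrightarrow> \<exists>b\<in>B. is_lub_on C le A b"
  shows "is_lub_on C le B r \<longleftrightarrow> is_lub_on C le (\<Union>\<A>) r"
proof -
  have "(\<forall>b\<in>B. le b u) \<longleftrightarrow> (\<forall>a\<in>\<Union>\<A>. le a u)" if "u \<in> C" for u
  proof
    assume "\<forall>b\<in>B. le b u"
    then show "\<forall>a\<in>\<Union>\<A>. le a u"
      using member_lub trans unfolding is_lub_on_def by (meson UnionE)
  next
    assume "\<forall>a\<in>\<Union>\<A>. le a u"
    then show "\<forall>b\<in>B. le b u"
      using lub_of_member that unfolding is_lub_on_def by blast
  qed
  then show ?thesis
    unfolding is_lub_on_def by blast
qed

lemma is_lub_on_cofinal_iff:
  assumes trans: "\<And>a b c. le a b \<Longrightarrow> le b c \<Longrightarrow> le a c"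
    and "B \<subseteq> A" and cofinal: "\<And>a. a \<in> A \<Longrightarrow> \<exists>b\<in>B. le a b"
  shows "is_lub_on C le A t \<longleftrightarrow> is_lub_on C le B t"
proof -
  have "(\<forall>a\<in>A. le a u) \<longleftrightarrow> (\<forall>b\<in>B. le b u)" for u
    using assms by blast
  then show ?thesis
    unfolding is_lub_on_def by blast
qed

section \<open>Partial commutative monoids and their sums\<close>

definition finite_sums :: "('b \<Rightarrow> 'b \<Rightarrow> 'b option) \<Rightarrow> 'b \<Rightarrow> ('i \<Rightarrow> 'b) \<Rightarrow> 'i set \<Rightarrow> 'b set"
  where "finite_sums add z g I = {t. \<exists>F. finite F \<and> F \<subseteq> I \<and> has_fsum add z g F t}"

definition finite_sums_defined :: "('b \<Rightarrow> 'b \<Rightarrow> 'b option) \<Rightarrow> 'b \<Rightarrow> ('i \<Rightarrow> 'b) \<Rightarrow> 'i set \<Rightarrow> bool"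
  where "finite_sums_defined add z g I \<longleftrightarrow> (\<forall>F. finite F \<and> F \<subseteq> I \<longrightarrow> (\<exists>t. has_fsum add z g F t))"

lemma has_psum_iff:
  "has_psum C le add z g I s \<longleftrightarrow>
    finite_sums_defined add z g I \<and> is_lub_on C le (finite_sums add z g I) s"
  unfolding has_psum_def finite_sums_def finite_sums_defined_def ..

locale scott_continuous_pcm =
  fixes add :: "'a \<Rightarrow> 'a \<Rightarrow> 'a option" and z :: 'a
  assumes add_commute: "add u v = add v u"
    and add_assoc: "addopt add (add u v) (Some w) = addopt add (Some u) (add v w)"
    and add_zero: "add z u = Some u"
    and le_antisym: "nat_le add u v \<Longrightarrow> nat_le add v u \<Longrightarrow> u = v"
    and directed_has_lub: "directed_set (nat_le add) D \<Longrightarrow> \<exists>s. is_lub_on UNIV (nat_le add) D s"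
    and add_lub_defined_iff: "directed_set (nat_le add) D \<Longrightarrow> is_lub_on UNIV (nat_le add) D s \<Longrightarrow>
      add s y \<noteq> None \<longleftrightarrow> (\<forall>x\<in>D. add x y \<noteq> None)"
    and add_lub: "directed_set (nat_le add) D \<Longrightarrow> is_lub_on UNIV (nat_le add) D s \<Longrightarrow>
      add s y = Some t \<Longrightarrow> is_lub_on UNIV (nat_le add) {c. \<exists>x\<in>D. add x y = Some c} t"
begin

abbreviation le (infix "\<preceq>" 50) where "u \<preceq> v \<equiv> nat_le add u v"

lemma add_zero_right: "add u z = Some u"
  using add_zero add_commute by metis

lemma add_assoc_right:
  assumes "add a b = Some u" and "add u c = Some t"
  shows "\<exists>w. add b c = Some w \<and> add a w = Some t"
  using add_assoc[of a b c] assms by (auto simp: addopt_def split: option.splits)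

lemma add_assoc_left:
  assumes "add b c = Some w" and "add a w = Some t"
  shows "\<exists>u. add a b = Some u \<and> add u c = Some t"
  using add_assoc[of a b c] assms by (auto simp: addopt_def split: option.splits)

lemma le_refl: "u \<preceq> u"
  unfolding nat_le_def using add_zero_right by blast

lemma le_trans: "u \<preceq> v \<Longrightarrow> v \<preceq> w \<Longrightarrow> u \<preceq> w"
  unfolding nat_le_def using add_assoc_right by blast

lemma le_zero_imp_eq: "u \<preceq> z \<Longrightarrow> u = z"
  using le_antisym add_zero unfolding nat_le_def by blast

lemma le_add_Some1: "add a b = Some c \<Longrightarrow> a \<preceq> c"
  unfolding nat_le_def by blast

lemma le_add_Some2: "add a b = Some c \<Longrightarrow> b \<preceq> c"
  unfolding nat_le_def using add_commute by metis

lemma add_mono_Some: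
  assumes "add a' b' = Some c'" and "a \<preceq> a'" and "b \<preceq> b'"
  shows "\<exists>c. add a b = Some c \<and> c \<preceq> c'"
proof -
  obtain p where p: "add a p = Some a'"
    using assms(2) unfolding nat_le_def by blast
  obtain q where q: "add b q = Some b'"
    using assms(3) unfolding nat_le_def by blast
  obtain w where w: "add p b' = Some w" "add a w = Some c'"
    using add_assoc_right[OF p assms(1)] by blast
  obtain k where k: "add p b = Some k" "add k q = Some w"
    using add_assoc_left[OF q w(1)] by blast
  obtain k' where k': "add a k = Some k'" "add k' q = Some c'"
    using add_assoc_left[OF k(2) w(2)] by blast
  have "add b p = Some k"
    using k(1) add_commute by metis
  then obtain c where c: "add a b = Some c" "add c p = Some k'"
    using add_assoc_left[OF _ k'(1)] by blast
  show ?thesis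
    using c le_trans[OF le_add_Some1[OF c(2)] le_add_Some1[OF k'(2)]] by blast
qed

lemma has_fsum_empty_iff: "has_fsum add z g {} t \<longleftrightarrow> t = z"
  by (auto elim: has_fsum.cases intro: has_fsum.fsum_empty)

lemma has_fsum_remove:
  "has_fsum add z g F t \<Longrightarrow> i \<in> F \<Longrightarrow> \<exists>s. has_fsum add z g (F - {i}) s \<and> add s (g i) = Some t"
proof (induction rule: has_fsum.induct)
  case fsum_empty
  then show ?case by simp
next
  case (fsum_insert F s j t)
  show ?case
  proof (cases "j = i")
    case True
    then show ?thesis
      using fsum_insert by auto
  next
    case False
    then obtain s' where s': "has_fsum add z g (F - {i}) s'" "add s' (g i) = Some s"
      using fsum_insert by auto
    obtain w where w: "add (g i) (g j) = Some w" "add s' w = Some t"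
      using add_assoc_right[OF s'(2) fsum_insert.hyps(3)] by blast
    obtain v where v: "add s' (g j) = Some v" "add v (g i) = Some t"
      using add_assoc_left[of "g j" "g i" w s' t] w add_commute by metis
    have "has_fsum add z g (insert j (F - {i})) v"
      using has_fsum.fsum_insert[OF s'(1) _ v(1)] fsum_insert.hyps(2) by blast
    moreover have "insert j (F - {i}) = insert j F - {i}"
      using False by auto
    ultimately show ?thesis
      using v(2) by auto
  qed
qed

lemma has_fsum_insert_iff:
  assumes "i \<notin> F"
  shows "has_fsum add z g (insert i F) t \<longleftrightarrow> (\<exists>s. has_fsum add z g F s \<and> add s (g i) = Some t)"
  using has_fsum_remove[of g "insert i F" t i] has_fsum.fsum_insert[of add z g F _ i t] assms
  by auto

lemma has_fsum_unique: "has_fsum add z g F t \<Longrightarrow> has_fsum add z g F t' \<Longrightarrow> t = t'"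
proof (induction arbitrary: t' rule: has_fsum.induct)
  case fsum_empty
  then show ?case
    by (simp add: has_fsum_empty_iff)
next
  case (fsum_insert F s i t)
  then show ?case
    using has_fsum_insert_iff[OF fsum_insert.hyps(2)] by (metis option.inject)
qed

lemma has_fsum_mono:
  "has_fsum add z b F tb \<Longrightarrow> (\<And>i. i \<in> F \<Longrightarrow> a i \<preceq> b i) \<Longrightarrow>
    \<exists>ta. has_fsum add z a F ta \<and> ta \<preceq> tb"
proof (induction rule: has_fsum.induct)
  case fsum_empty
  have "has_fsum add z a {} z"
    by (rule has_fsum.fsum_empty)
  then show ?case
    using le_refl by blast
next
  case (fsum_insert F s i t)
  have le: "a j \<preceq> b j" if "j \<in> insert i F" for j
    using fsum_insert.prems that .
  then obtain sa where sa: "has_fsum add z a F sa" "sa \<preceq> s"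
    using fsum_insert.IH by blast
  obtain c where "add sa (a i) = Some c" "c \<preceq> t"
    using add_mono_Some[OF fsum_insert.hyps(3) sa(2)] le by blast
  then show ?case
    using has_fsum.fsum_insert[OF sa(1) fsum_insert.hyps(2)] by blast
qed

lemma has_fsum_subset_le:
  "has_fsum add z g F' t' \<Longrightarrow> F \<subseteq> F' \<Longrightarrow> \<exists>t. has_fsum add z g F t \<and> t \<preceq> t'"
proof (induction arbitrary: F rule: has_fsum.induct)
  case fsum_empty
  then have "F = {}" "has_fsum add z g {} z"
    by (auto intro: has_fsum.fsum_empty)
  then show ?case
    using le_refl by blast
next
  case (fsum_insert F' s i t)
  show ?case
  proof (cases "i \<in> F")
    case True
    have "F - {i} \<subseteq> F'"
      using fsum_insert.prems by blast
    then obtain s0 where s0: "has_fsum add z g (F - {i}) s0" "s0 \<preceq> s"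
      using fsum_insert.IH by blast
    obtain c where c: "add s0 (g i) = Some c" "c \<preceq> t"
      using add_mono_Some[OF fsum_insert.hyps(3) s0(2) le_refl] by blast
    have "has_fsum add z g (insert i (F - {i})) c"
      using has_fsum.fsum_insert[OF s0(1) _ c(1)] by blast
    moreover have "insert i (F - {i}) = F"
      using True by blast
    ultimately show ?thesis
      using c(2) by auto
  next
    case False
    then have "F \<subseteq> F'"
      using fsum_insert.prems by blast
    then obtain s0 where "has_fsum add z g F s0" "s0 \<preceq> s"
      using fsum_insert.IH by blast
    then show ?thesis
      using le_trans[OF _ le_add_Some1[OF fsum_insert.hyps(3)]] by blast
  qed
qed

lemma directed_finite_sums:
  assumes "finite_sums_defined add z g I"
  shows "directed_set (\<preceq>) (finite_sums add z g I)"
  unfolding directed_set_def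
proof (intro conjI ballI)
  have "has_fsum add z g {} z"
    by (rule has_fsum.fsum_empty)
  then show "finite_sums add z g I \<noteq> {}"
    unfolding finite_sums_def by auto
  fix a b
  assume "a \<in> finite_sums add z g I" and "b \<in> finite_sums add z g I"
  then obtain Fa Fb where F: "finite Fa" "Fa \<subseteq> I" "has_fsum add z g Fa a"
    "finite Fb" "Fb \<subseteq> I" "has_fsum add z g Fb b"
    unfolding finite_sums_def by blast
  then obtain c where c: "has_fsum add z g (Fa \<union> Fb) c"
    using assms unfolding finite_sums_defined_def by (meson finite_UnI le_sup_iff)
  have "a \<preceq> c"
    using has_fsum_subset_le[OF c, of Fa] has_fsum_unique F(3) by blast
  moreover have "b \<preceq> c"
    using has_fsum_subset_le[OF c, of Fb] has_fsum_unique F(6) by blast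
  moreover have "c \<in> finite_sums add z g I"
    unfolding finite_sums_def using c F by auto
  ultimately show "\<exists>c\<in>finite_sums add z g I. a \<preceq> c \<and> b \<preceq> c"
    by blast
qed

lemma has_psum_exists_iff:
  "(\<exists>s. has_psum UNIV (\<preceq>) add z g I s) \<longleftrightarrow> finite_sums_defined add z g I"
  using directed_has_lub[OF directed_finite_sums] unfolding has_psum_iff by blast

lemma has_psum_exists_if_le:
  assumes b: "has_psum UNIV (\<preceq>) add z b I t" and le: "\<And>i. i \<in> I \<Longrightarrow> a i \<preceq> b i"
  shows "\<exists>s. has_psum UNIV (\<preceq>) add z a I s"
  unfolding has_psum_exists_iff finite_sums_defined_def
proof (intro allI impI)
  fix F
  assume F: "finite F \<and> F \<subseteq> I"
  then obtain tb where tb: "has_fsum add z b F tb"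
    using b unfolding has_psum_iff finite_sums_defined_def by blast
  have "a i \<preceq> b i" if "i \<in> F" for i
    using le F that by auto
  then show "\<exists>t. has_fsum add z a F t"
    using has_fsum_mono[OF tb] by blast
qed

lemma has_psum_mono:
  assumes le: "\<And>i. i \<in> I \<Longrightarrow> a i \<preceq> b i"
    and a: "has_psum UNIV (\<preceq>) add z a I s" and b: "has_psum UNIV (\<preceq>) add z b I t"
  shows "s \<preceq> t"
proof (rule is_lub_on_least[of UNIV "(\<preceq>)"])
  show "is_lub_on UNIV (\<preceq>) (finite_sums add z a I) s"
    using a unfolding has_psum_iff by simp
  fix ta
  assume "ta \<in> finite_sums add z a I"
  then obtain F where F: "finite F" "F \<subseteq> I" and ta: "has_fsum add z a F ta"
    unfolding finite_sums_def by blast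
  obtain tb where tb: "has_fsum add z b F tb"
    using b F unfolding has_psum_iff finite_sums_defined_def by auto
  have "a i \<preceq> b i" if "i \<in> F" for i
    using le F(2) that by auto
  then obtain ta' where ta': "has_fsum add z a F ta'" "ta' \<preceq> tb"
    using has_fsum_mono[OF tb] by blast
  have "tb \<preceq> t"
    using b F tb unfolding has_psum_iff finite_sums_def by (auto intro: is_lub_on_upper)
  then show "ta \<preceq> t"
    using has_fsum_unique[OF ta ta'(1)] le_trans[OF ta'(2)] by simp
qed simp

section \<open>Sums commute with directed suprema\<close>

lemma add_lub_defined_iff_right:
  "directed_set (\<preceq>) D \<Longrightarrow> is_lub_on UNIV (\<preceq>) D s \<Longrightarrow>
    add y s \<noteq> None \<longleftrightarrow> (\<forall>x\<in>D. add y x \<noteq> None)"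
  using add_lub_defined_iff add_commute by presburger

lemma add_lub_right:
  assumes "directed_set (\<preceq>) D" and "is_lub_on UNIV (\<preceq>) D s" and "add y s = Some t"
  shows "is_lub_on UNIV (\<preceq>) {c. \<exists>x\<in>D. add y x = Some c} t"
proof -
  have "{c. \<exists>x\<in>D. add y x = Some c} = {c. \<exists>x\<in>D. add x y = Some c}"
    by (simp add: add_commute[of y])
  then show ?thesis
    using add_lub[OF assms(1,2), of y t] assms(3) add_commute[of y] by simp
qed

lemma add_lub_lub:
  assumes A: "directed_set (\<preceq>) A" "is_lub_on UNIV (\<preceq>) A P"
    and B: "directed_set (\<preceq>) B" "is_lub_on UNIV (\<preceq>) B Q"
    and defined: "\<And>a b. a \<in> A \<Longrightarrow> b \<in> B \<Longrightarrow> add a b \<noteq> None"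
  shows "\<exists>t. add P Q = Some t \<and> is_lub_on UNIV (\<preceq>) {c. \<exists>a\<in>A. \<exists>b\<in>B. add a b = Some c} t"
proof -
  have "add P b \<noteq> None" if "b \<in> B" for b
    using add_lub_defined_iff[OF A, of b] defined that by simp
  then obtain t where t: "add P Q = Some t"
    using add_lub_defined_iff_right[OF B, of P] by force
  have "c \<preceq> t" if "c \<in> {c. \<exists>a\<in>A. \<exists>b\<in>B. add a b = Some c}" for c
    using that add_mono_Some[OF t is_lub_on_upper[OF A(2)] is_lub_on_upper[OF B(2)]] by force
  moreover have "t \<preceq> u" if u: "\<And>c. c \<in> {c. \<exists>a\<in>A. \<exists>b\<in>B. add a b = Some c} \<Longrightarrow> c \<preceq> u" for u
  proof (rule is_lub_on_least[OF add_lub_right[OF B t]])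
    fix c
    assume "c \<in> {c. \<exists>b\<in>B. add P b = Some c}"
    then obtain b where b: "b \<in> B" "add P b = Some c"
      by blast
    show "c \<preceq> u"
      by (rule is_lub_on_least[OF add_lub[OF A b(2)]]) (use b(1) u in auto)
  qed simp
  ultimately show ?thesis
    using t unfolding is_lub_on_def by blast
qed

lemma add_lub_diagonal:
  fixes p q r :: "'x::preorder \<Rightarrow> 'a"
  assumes D: "directed_set (\<le>) D"
    and p: "monotone_on D (\<le>) (\<preceq>) p" "is_lub_on UNIV (\<preceq>) (p ` D) P"
    and q: "monotone_on D (\<le>) (\<preceq>) q" "is_lub_on UNIV (\<preceq>) (q ` D) Q"
    and r: "\<And>x. x \<in> D \<Longrightarrow> add (p x) (q x) = Some (r x)"
  shows "\<exists>t. add P Q = Some t \<and> is_lub_on UNIV (\<preceq>) (r ` D) t"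
proof -
  have cross: "\<exists>x''\<in>D. \<exists>c. add (p x) (q x') = Some c \<and> c \<preceq> r x''"
    if x: "x \<in> D" and x': "x' \<in> D" for x x'
  proof -
    obtain x'' where x'': "x'' \<in> D" "x \<le> x''" "x' \<le> x''"
      using D x x' unfolding directed_set_def by blast
    have "p x \<preceq> p x''" "q x' \<preceq> q x''"
      using monotone_onD[OF p(1) x x''(1,2)] monotone_onD[OF q(1) x' x''(1,3)] .
    then show ?thesis
      using add_mono_Some[OF r[OF x''(1)]] x''(1) by blast
  qed
  have dir_p: "directed_set (\<preceq>) (p ` D)" and dir_q: "directed_set (\<preceq>) (q ` D)"
    using directed_set_image_monotone[OF D] p(1) q(1) by blast+
  have defined: "add a b \<noteq> None" if "a \<in> p ` D" "b \<in> q ` D" for a b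
    using that cross by force
  obtain t where t: "add P Q = Some t"
    and lub: "is_lub_on UNIV (\<preceq>) {c. \<exists>a\<in>p ` D. \<exists>b\<in>q ` D. add a b = Some c} t"
    using add_lub_lub[OF dir_p p(2) dir_q q(2) defined] by blast
  have diagonal: "r ` D \<subseteq> {c. \<exists>a\<in>p ` D. \<exists>b\<in>q ` D. add a b = Some c}"
    using r by force
  have cofinal: "\<exists>c'\<in>r ` D. c \<preceq> c'" if "c \<in> {c. \<exists>a\<in>p ` D. \<exists>b\<in>q ` D. add a b = Some c}" for c
    using that cross by force
  have "is_lub_on UNIV (\<preceq>) (r ` D) t"
    by (rule iffD1[OF is_lub_on_cofinal_iff[OF le_trans diagonal cofinal] lub])
  then show ?thesis
    using t by blast
qed

lemma monotone_on_has_fsum: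
  fixes a :: "'i \<Rightarrow> 'x::preorder \<Rightarrow> 'a"
  assumes mono: "\<And>i. i \<in> F \<Longrightarrow> monotone_on D (\<le>) (\<preceq>) (a i)"
    and p: "\<And>x. x \<in> D \<Longrightarrow> has_fsum add z (\<lambda>i. a i x) F (p x)"
  shows "monotone_on D (\<le>) (\<preceq>) p"
proof (rule monotone_onI)
  fix x x'
  assume "x \<in> D" "x' \<in> D" "x \<le> x'"
  then have "a i x \<preceq> a i x'" if "i \<in> F" for i
    using mono[OF that] unfolding monotone_on_def by blast
  then obtain t where "has_fsum add z (\<lambda>i. a i x) F t" "t \<preceq> p x'"
    using has_fsum_mono[OF p[OF \<open>x' \<in> D\<close>], of "\<lambda>i. a i x"] by blast
  then show "p x \<preceq> p x'"
    using has_fsum_unique p[OF \<open>x \<in> D\<close>] by blast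
qed

lemma has_fsum_lub_image:
  fixes a :: "'i \<Rightarrow> 'x::preorder \<Rightarrow> 'a"
  assumes D: "directed_set (\<le>) D" and "finite F"
    and mono: "\<And>i. i \<in> F \<Longrightarrow> monotone_on D (\<le>) (\<preceq>) (a i)"
    and lub: "\<And>i. i \<in> F \<Longrightarrow> is_lub_on UNIV (\<preceq>) (a i ` D) (b i)"
    and p: "\<And>x. x \<in> D \<Longrightarrow> has_fsum add z (\<lambda>i. a i x) F (p x)"
  shows "\<exists>t. has_fsum add z b F t \<and> is_lub_on UNIV (\<preceq>) (p ` D) t"
  using \<open>finite F\<close> mono lub p
proof (induction F arbitrary: p rule: finite_induct)
  case empty
  then have "p ` D = {z}"
    using D unfolding directed_set_def by (auto simp: has_fsum_empty_iff)
  then show ?case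
    using has_fsum.fsum_empty le_refl unfolding is_lub_on_def by fastforce
next
  case (insert i F)
  have "\<exists>s. has_fsum add z (\<lambda>j. a j x) F s \<and> add s (a i x) = Some (p x)" if "x \<in> D" for x
    using insert.prems(3)[OF that] has_fsum_insert_iff[OF insert.hyps(2)] by blast
  then obtain q where q: "\<And>x. x \<in> D \<Longrightarrow> has_fsum add z (\<lambda>j. a j x) F (q x)"
    and q_add: "\<And>x. x \<in> D \<Longrightarrow> add (q x) (a i x) = Some (p x)"
    by metis
  obtain \<sigma> where \<sigma>: "has_fsum add z b F \<sigma>" "is_lub_on UNIV (\<preceq>) (q ` D) \<sigma>"
    using insert.IH[OF _ _ q] insert.prems(1,2) by blast
  have "monotone_on D (\<le>) (\<preceq>) q"
    by (rule monotone_on_has_fsum[OF _ q]) (simp add: insert.prems(1))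
  then obtain t where "add \<sigma> (b i) = Some t" "is_lub_on UNIV (\<preceq>) (p ` D) t"
    using add_lub_diagonal[OF D _ \<sigma>(2) _ _ q_add] insert.prems(1,2) by blast
  then show ?case
    using has_fsum.fsum_insert[OF \<sigma>(1) insert.hyps(2)] by blast
qed

lemma has_fsum_lub:
  fixes a :: "'i \<Rightarrow> 'x::preorder \<Rightarrow> 'a"
  assumes D: "directed_set (\<le>) D" and F: "finite F"
    and mono: "\<And>i. i \<in> F \<Longrightarrow> monotone_on D (\<le>) (\<preceq>) (a i)"
    and lub: "\<And>i. i \<in> F \<Longrightarrow> is_lub_on UNIV (\<preceq>) (a i ` D) (b i)"
    and defined: "\<And>x. x \<in> D \<Longrightarrow> \<exists>t. has_fsum add z (\<lambda>i. a i x) F t"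
  shows "\<exists>t. has_fsum add z b F t \<and> is_lub_on UNIV (\<preceq>) {t. \<exists>x\<in>D. has_fsum add z (\<lambda>i. a i x) F t} t"
proof -
  obtain p where p: "\<And>x. x \<in> D \<Longrightarrow> has_fsum add z (\<lambda>i. a i x) F (p x)"
    using defined by metis
  then have "{t. \<exists>x\<in>D. has_fsum add z (\<lambda>i. a i x) F t} = p ` D"
    using has_fsum_unique by blast
  then show ?thesis
    using has_fsum_lub_image[OF D F mono lub p] by simp
qed

lemma has_psum_lub_interchange:
  fixes a :: "'i \<Rightarrow> 'x::preorder \<Rightarrow> 'a"
  assumes D: "directed_set (\<le>) D"
    and mono: "\<And>i. i \<in> I \<Longrightarrow> monotone_on D (\<le>) (\<preceq>) (a i)"
    and lub: "\<And>i. i \<in> I \<Longrightarrow> is_lub_on UNIV (\<preceq>) (a i ` D) (b i)"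
    and g: "\<And>x. x \<in> D \<Longrightarrow> has_psum UNIV (\<preceq>) add z (\<lambda>i. a i x) I (g x)"
  shows "has_psum UNIV (\<preceq>) add z b I r \<longleftrightarrow> is_lub_on UNIV (\<preceq>) (g ` D) r"
proof -
  define S where "S F = {t. \<exists>x\<in>D. has_fsum add z (\<lambda>i. a i x) F t}" for F
  have b_sum: "\<exists>t. has_fsum add z b F t \<and> is_lub_on UNIV (\<preceq>) (S F) t"
    if F: "finite F" "F \<subseteq> I" for F
    unfolding S_def
  proof (rule has_fsum_lub[OF D F(1)])
    show "\<exists>t. has_fsum add z (\<lambda>i. a i x) F t" if "x \<in> D" for x
      using g[OF that] F unfolding has_psum_iff finite_sums_defined_def by blast
  qed (use mono lub F(2) in auto)
  have "has_psum UNIV (\<preceq>) add z b I r \<longleftrightarrow> is_lub_on UNIV (\<preceq>) (finite_sums add z b I) r"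
    unfolding has_psum_iff finite_sums_defined_def using b_sum by blast
  also have "\<dots> \<longleftrightarrow> is_lub_on UNIV (\<preceq>) (\<Union>(S ` {F. finite F \<and> F \<subseteq> I})) r"
  proof (rule is_lub_on_Union_iff)
    show "\<exists>A\<in>S ` {F. finite F \<and> F \<subseteq> I}. is_lub_on UNIV (\<preceq>) A t"
      if "t \<in> finite_sums add z b I" for t
      using that b_sum has_fsum_unique unfolding finite_sums_def by blast
    show "\<exists>t\<in>finite_sums add z b I. is_lub_on UNIV (\<preceq>) A t"
      if "A \<in> S ` {F. finite F \<and> F \<subseteq> I}" for A
      using that b_sum unfolding finite_sums_def
      by (auto simp del: mem_Collect_eq) (metis (no_types, lifting))
  qed (rule le_trans)
  also have "\<Union>(S ` {F. finite F \<and> F \<subseteq> I}) = \<Union>((\<lambda>x. finite_sums add z (\<lambda>i. a i x) I) ` D)"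
    unfolding S_def finite_sums_def by blast
  also have "is_lub_on UNIV (\<preceq>) \<dots> r \<longleftrightarrow> is_lub_on UNIV (\<preceq>) (g ` D) r"
  proof (rule is_lub_on_Union_iff[symmetric])
    show "\<exists>A\<in>(\<lambda>x. finite_sums add z (\<lambda>i. a i x) I) ` D. is_lub_on UNIV (\<preceq>) A t"
      if "t \<in> g ` D" for t
      using that g unfolding has_psum_iff by blast
    show "\<exists>t\<in>g ` D. is_lub_on UNIV (\<preceq>) A t"
      if "A \<in> (\<lambda>x. finite_sums add z (\<lambda>i. a i x) I) ` D" for A
      using that g unfolding has_psum_iff by blast
  qed (rule le_trans)
  finally show ?thesis .
qed

section \<open>Weighting functions\<close>

abbreviation W :: "('y \<Rightarrow> 'a) set" where "W \<equiv> Wset add z"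

lemma Wset_le_closed:
  assumes m': "m' \<in> W" and le: "\<And>y. m y \<preceq> m' y"
  shows "m \<in> W"
proof -
  have supp: "supp_w z m \<subseteq> supp_w z m'"
  proof
    fix y
    assume "y \<in> supp_w z m"
    then show "y \<in> supp_w z m'"
      using le[of y] le_zero_imp_eq unfolding supp_w_def by auto
  qed
  obtain s' where "has_psum UNIV (\<preceq>) add z m' (supp_w z m') s'"
    using m' unfolding Wset_def by auto
  then have m'_sums: "finite_sums_defined add z m' (supp_w z m')"
    unfolding has_psum_iff by simp
  have "\<exists>t. has_fsum add z m F t" if F: "finite F" "F \<subseteq> supp_w z m" for F
  proof -
    have "F \<subseteq> supp_w z m'"
      using F(2) supp by (rule subset_trans)
    then obtain t' where "has_fsum add z m' F t'"
      using m'_sums F(1) unfolding finite_sums_defined_def by auto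
    then show ?thesis
      using has_fsum_mono[of m' F t' m] le by auto
  qed
  then have "\<exists>s. has_psum UNIV (\<preceq>) add z m (supp_w z m) s"
    unfolding has_psum_exists_iff finite_sums_defined_def by simp
  moreover have "countable (supp_w z m)"
    using m' countable_subset[OF supp] unfolding Wset_def by simp
  ultimately show ?thesis
    unfolding Wset_def by simp
qed

lemma zeroW_in_Wset: "zeroW z \<in> W"
proof -
  have "supp_w z (zeroW z) = {}"
    unfolding supp_w_def zeroW_def by simp
  moreover have "\<exists>s. has_psum UNIV (\<preceq>) add z (zeroW z) {} s"
    by (simp add: has_psum_exists_iff finite_sums_defined_def has_fsum_empty_iff)
  ultimately show ?thesis
    unfolding Wset_def by (metis (mono_tags) countable_empty mem_Collect_eq)
qed

lemma addW_eq_Some_iff: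
  "addW add z m1 m2 = Some m \<longleftrightarrow>
    m1 \<in> W \<and> m2 \<in> W \<and> m \<in> W \<and> (\<forall>y. add (m1 y) (m2 y) = Some (m y))"
proof
  assume "addW add z m1 m2 = Some m"
  then show "m1 \<in> W \<and> m2 \<in> W \<and> m \<in> W \<and> (\<forall>y. add (m1 y) (m2 y) = Some (m y))"
    unfolding addW_def by (auto split: if_splits)
next
  assume m: "m1 \<in> W \<and> m2 \<in> W \<and> m \<in> W \<and> (\<forall>y. add (m1 y) (m2 y) = Some (m y))"
  then have "(\<lambda>y. the (add (m1 y) (m2 y))) = m"
    by auto
  then show "addW add z m1 m2 = Some m"
    using m unfolding addW_def by auto
qed

lemma leW_iff: "leW add z m m' \<longleftrightarrow> m \<in> W \<and> m' \<in> W \<and> (\<forall>y. m y \<preceq> m' y)"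
proof
  assume "leW add z m m'"
  then show "m \<in> W \<and> m' \<in> W \<and> (\<forall>y. m y \<preceq> m' y)"
    unfolding leW_def nat_le_def addW_eq_Some_iff by blast
next
  assume m: "m \<in> W \<and> m' \<in> W \<and> (\<forall>y. m y \<preceq> m' y)"
  then obtain d where d: "\<And>y. add (m y) (d y) = Some (m' y)"
    unfolding nat_le_def by metis
  then have "d \<in> W"
    using Wset_le_closed[of m' d] m le_add_Some2 by blast
  then show "leW add z m m'"
    unfolding leW_def nat_le_def addW_eq_Some_iff using m d by blast
qed

lemma has_fsum_addW_imp:
  "has_fsum (addW add z) (zeroW z) G F T \<Longrightarrow> T \<in> W \<and> (\<forall>y. has_fsum add z (\<lambda>i. G i y) F (T y))"
proof (induction rule: has_fsum.induct)
  case fsum_empty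
  have "has_fsum add z (\<lambda>i. G i y) {} (zeroW z y)" for y
    unfolding zeroW_def by (rule has_fsum.fsum_empty)
  then show ?case
    using zeroW_in_Wset by blast
next
  case (fsum_insert F s i t)
  have "t \<in> W" and add_eq: "\<And>y. add (s y) (G i y) = Some (t y)"
    using fsum_insert.hyps(3) unfolding addW_eq_Some_iff by blast+
  have "has_fsum add z (\<lambda>j. G j y) (insert i F) (t y)" for y
    using has_fsum.fsum_insert[of add z "\<lambda>j. G j y" F "s y" i "t y"] fsum_insert.hyps(2) add_eq
      fsum_insert.IH by blast
  then show ?case
    using \<open>t \<in> W\<close> by blast
qed

lemma has_fsum_addW_if:
  "finite F \<Longrightarrow> (\<And>i. i \<in> F \<Longrightarrow> G i \<in> W) \<Longrightarrow> T \<in> W \<Longrightarrow>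
    (\<And>y. has_fsum add z (\<lambda>i. G i y) F (T y)) \<Longrightarrow> has_fsum (addW add z) (zeroW z) G F T"
proof (induction F arbitrary: T rule: finite_induct)
  case empty
  then have "T y = z" for y
    using has_fsum_empty_iff by blast
  then have "T = zeroW z"
    unfolding zeroW_def by (rule ext)
  then show ?case
    using has_fsum.fsum_empty by simp
next
  case (insert i F)
  have "\<exists>s. has_fsum add z (\<lambda>j. G j y) F s \<and> add s (G i y) = Some (T y)" for y
    using insert.prems(3) has_fsum_insert_iff[OF insert.hyps(2)] by blast
  then obtain S where S: "\<And>y. has_fsum add z (\<lambda>j. G j y) F (S y)"
    and S_add: "\<And>y. add (S y) (G i y) = Some (T y)"
    by metis
  have "S \<in> W"
    using Wset_le_closed[of T S] insert.prems(2) S_add le_add_Some1 by blast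
  then have "has_fsum (addW add z) (zeroW z) G F S"
    using insert.IH S insert.prems(1) by simp
  moreover have "addW add z S (G i) = Some T"
    unfolding addW_eq_Some_iff using \<open>S \<in> W\<close> insert.prems S_add by simp
  ultimately show ?case
    using has_fsum.fsum_insert insert.hyps(2) by metis
qed

lemma finite_sums_addW_subset: "finite_sums (addW add z) (zeroW z) G I \<subseteq> W"
  unfolding finite_sums_def using has_fsum_addW_imp by blast

lemma finite_sums_defined_addW_imp:
  assumes defined: "finite_sums_defined (addW add z) (zeroW z) G I"
  shows "finite_sums_defined add z (\<lambda>i. G i y) I"
  unfolding finite_sums_defined_def
proof (intro allI impI)
  fix F
  assume F: "finite F \<and> F \<subseteq> I"
  then obtain T where "has_fsum (addW add z) (zeroW z) G F T"
    using defined unfolding finite_sums_defined_def by auto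
  then show "\<exists>t. has_fsum add z (\<lambda>i. G i y) F t"
    using has_fsum_addW_imp by blast
qed

lemma finite_sums_defined_addW:
  assumes G: "\<And>i. i \<in> I \<Longrightarrow> G i \<in> W"
    and r: "r \<in> W" and r_sum: "\<And>y. has_psum UNIV (\<preceq>) add z (\<lambda>i. G i y) I (r y)"
  shows "finite_sums_defined (addW add z) (zeroW z) G I"
  unfolding finite_sums_defined_def
proof (intro allI impI)
  fix F
  assume F: "finite F \<and> F \<subseteq> I"
  have "\<exists>t. has_fsum add z (\<lambda>i. G i y) F t" for y
    using r_sum[of y] F unfolding has_psum_iff finite_sums_defined_def by simp
  then obtain T where T: "\<And>y. has_fsum add z (\<lambda>i. G i y) F (T y)"
    by metis
  have "T y \<preceq> r y" for y
  proof (rule is_lub_on_upper[of UNIV "(\<preceq>)"])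
    show "is_lub_on UNIV (\<preceq>) (finite_sums add z (\<lambda>i. G i y) I) (r y)"
      using r_sum[of y] unfolding has_psum_iff by simp
    show "T y \<in> finite_sums add z (\<lambda>i. G i y) I"
      unfolding finite_sums_def using F T by auto
  qed
  then have "T \<in> W"
    by (rule Wset_le_closed[OF r])
  then show "\<exists>T. has_fsum (addW add z) (zeroW z) G F T"
    using has_fsum_addW_if[of F G T] G F T by auto
qed

lemma finite_sums_addW_apply:
  assumes defined: "finite_sums_defined (addW add z) (zeroW z) G I"
  shows "(\<lambda>m. m y) ` finite_sums (addW add z) (zeroW z) G I = finite_sums add z (\<lambda>i. G i y) I"
proof (intro equalityI subsetI)
  fix t
  assume "t \<in> (\<lambda>m. m y) ` finite_sums (addW add z) (zeroW z) G I"
  then obtain T F where "t = T y" "finite F" "F \<subseteq> I" "has_fsum (addW add z) (zeroW z) G F T"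
    unfolding finite_sums_def by auto
  then show "t \<in> finite_sums add z (\<lambda>i. G i y) I"
    unfolding finite_sums_def using has_fsum_addW_imp[of G F T] by auto
next
  fix t
  assume "t \<in> finite_sums add z (\<lambda>i. G i y) I"
  then obtain F where F: "finite F" "F \<subseteq> I" and t: "has_fsum add z (\<lambda>i. G i y) F t"
    unfolding finite_sums_def by auto
  obtain T where T: "has_fsum (addW add z) (zeroW z) G F T"
    using defined F unfolding finite_sums_defined_def by auto
  then have "has_fsum add z (\<lambda>i. G i y) F (T y)"
    using has_fsum_addW_imp by blast
  then have "T y = t"
    using has_fsum_unique[OF _ t] by blast
  then show "t \<in> (\<lambda>m. m y) ` finite_sums (addW add z) (zeroW z) G I"
    unfolding finite_sums_def using T F by auto
qed

lemma is_lub_on_WsetI: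
  assumes A: "A \<subseteq> W" and "r \<in> W" and r: "\<And>y. is_lub_on UNIV (\<preceq>) ((\<lambda>m. m y) ` A) (r y)"
  shows "is_lub_on W (leW add z) A r"
  unfolding is_lub_on_def
proof (intro conjI ballI impI)
  show "r \<in> W"
    by fact
next
  fix m
  assume "m \<in> A"
  then show "leW add z m r"
    unfolding leW_iff using A \<open>r \<in> W\<close> is_lub_on_upper[OF r imageI] by auto
next
  fix u
  assume u: "u \<in> W" "\<forall>m\<in>A. leW add z m u"
  have "r y \<preceq> u y" for y
    by (rule is_lub_on_least[OF r]) (use u(2) in \<open>auto simp: leW_iff\<close>)
  then show "leW add z r u"
    unfolding leW_iff using \<open>r \<in> W\<close> u(1) by simp
qed

lemma is_lub_on_Wset_iff:
  assumes A: "A \<subseteq> W" and lubs: "\<And>y. \<exists>p. is_lub_on UNIV (\<preceq>) ((\<lambda>m. m y) ` A) p"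
  shows "is_lub_on W (leW add z) A r \<longleftrightarrow>
    r \<in> W \<and> (\<forall>y. is_lub_on UNIV (\<preceq>) ((\<lambda>m. m y) ` A) (r y))"
proof
  assume r: "is_lub_on W (leW add z) A r"
  obtain p where p: "\<And>y. is_lub_on UNIV (\<preceq>) ((\<lambda>m. m y) ` A) (p y)"
    using lubs by metis
  have "r \<in> W"
    using r unfolding is_lub_on_def by simp
  have r_upper: "m y \<preceq> r y" if "m \<in> A" for m y
    using is_lub_on_upper[OF r that] unfolding leW_iff by simp
  have p_le: "p y \<preceq> r y" for y
    by (rule is_lub_on_least[OF p]) (use r_upper in auto)
  then have "p \<in> W"
    using Wset_le_closed[OF \<open>r \<in> W\<close>] by simp
  then have "leW add z r p"
    using is_lub_on_least[OF r] is_lub_on_WsetI[OF A _ p] unfolding is_lub_on_def by blast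
  then have "r y = p y" for y
    using p_le le_antisym unfolding leW_iff by simp
  then show "r \<in> W \<and> (\<forall>y. is_lub_on UNIV (\<preceq>) ((\<lambda>m. m y) ` A) (r y))"
    using \<open>r \<in> W\<close> p by simp
next
  assume "r \<in> W \<and> (\<forall>y. is_lub_on UNIV (\<preceq>) ((\<lambda>m. m y) ` A) (r y))"
  then show "is_lub_on W (leW add z) A r"
    using is_lub_on_WsetI[OF A] by simp
qed

lemma has_sumW_iff:
  assumes G: "\<And>i. i \<in> I \<Longrightarrow> G i \<in> W"
  shows "has_sumW add z G I r \<longleftrightarrow>
    r \<in> W \<and> (\<forall>y. has_psum UNIV (\<preceq>) add z (\<lambda>i. G i y) I (r y))"
proof
  assume "has_sumW add z G I r"
  then have defined: "finite_sums_defined (addW add z) (zeroW z) G I"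
    and lub: "is_lub_on W (leW add z) (finite_sums (addW add z) (zeroW z) G I) r"
    unfolding has_sumW_def has_psum_iff by simp_all
  have defined_at: "finite_sums_defined add z (\<lambda>i. G i y) I" for y
    by (rule finite_sums_defined_addW_imp[OF defined])
  have lubs: "\<exists>p. is_lub_on UNIV (\<preceq>) ((\<lambda>m. m y) ` finite_sums (addW add z) (zeroW z) G I) p" for y
    unfolding finite_sums_addW_apply[OF defined]
    by (rule directed_has_lub[OF directed_finite_sums[OF defined_at]])
  have "r \<in> W \<and> (\<forall>y. is_lub_on UNIV (\<preceq>) (finite_sums add z (\<lambda>i. G i y) I) (r y))"
    using lub
    unfolding is_lub_on_Wset_iff[OF finite_sums_addW_subset lubs] finite_sums_addW_apply[OF defined] .
  then show "r \<in> W \<and> (\<forall>y. has_psum UNIV (\<preceq>) add z (\<lambda>i. G i y) I (r y))"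
    unfolding has_psum_iff using defined_at by simp
next
  assume r: "r \<in> W \<and> (\<forall>y. has_psum UNIV (\<preceq>) add z (\<lambda>i. G i y) I (r y))"
  then have defined: "finite_sums_defined (addW add z) (zeroW z) G I"
    by (intro finite_sums_defined_addW[OF G]) auto
  have r_lub: "is_lub_on UNIV (\<preceq>) ((\<lambda>m. m y) ` finite_sums (addW add z) (zeroW z) G I) (r y)" for y
    using r unfolding finite_sums_addW_apply[OF defined] has_psum_iff by simp
  then have lubs: "\<exists>p. is_lub_on UNIV (\<preceq>) ((\<lambda>m. m y) ` finite_sums (addW add z) (zeroW z) G I) p"
    for y
    by blast
  have "is_lub_on W (leW add z) (finite_sums (addW add z) (zeroW z) G I) r"
    unfolding is_lub_on_Wset_iff[OF finite_sums_addW_subset lubs] using r r_lub by simp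
  then show "has_sumW add z G I r"
    unfolding has_sumW_def has_psum_iff using defined by simp
qed

lemma scott_cont_W_in_Wset: "scott_cont_W add z f \<Longrightarrow> f x \<in> W"
  unfolding scott_cont_W_def by simp

lemma scott_cont_W_lub_Wset:
  "scott_cont_W add z f \<Longrightarrow> directed_set (\<le>) D \<Longrightarrow> is_lub_on UNIV (\<le>) D s \<Longrightarrow>
    is_lub_on W (leW add z) (f ` D) (f s)"
  unfolding scott_cont_W_def by simp

lemma scott_cont_W_monotone:
  fixes f :: "'x::order \<Rightarrow> 'y \<Rightarrow> 'a"
  assumes f: "scott_cont_W add z f"
  shows "monotone (\<le>) (\<preceq>) (\<lambda>x. f x y)"
proof (rule monotoneI)
  fix x x' :: 'x
  assume "x \<le> x'"
  then have "directed_set (\<le>) {x, x'}" and "is_lub_on UNIV (\<le>) {x, x'} x'"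
    unfolding directed_set_def is_lub_on_def by auto
  then have "leW add z (f x) (f x')"
    using is_lub_on_upper[OF scott_cont_W_lub_Wset[OF f]] by simp
  then show "f x y \<preceq> f x' y"
    unfolding leW_iff by simp
qed

lemma scott_cont_W_lub:
  fixes f :: "'x::order \<Rightarrow> 'y \<Rightarrow> 'a"
  assumes f: "scott_cont_W add z f" and D: "directed_set (\<le>) D" and s: "is_lub_on UNIV (\<le>) D s"
  shows "is_lub_on UNIV (\<preceq>) ((\<lambda>x. f x y) ` D) (f s y)"
proof -
  have "f ` D \<subseteq> W"
    using scott_cont_W_in_Wset[OF f] by blast
  moreover have "\<exists>p. is_lub_on UNIV (\<preceq>) ((\<lambda>m. m y) ` f ` D) p" for y
  proof -
    have "monotone_on D (\<le>) (\<preceq>) (\<lambda>x. f x y)"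
      using monotone_on_subset[OF scott_cont_W_monotone[OF f]] by simp
    then have "directed_set (\<preceq>) ((\<lambda>x. f x y) ` D)"
      by (rule directed_set_image_monotone[OF D])
    then show ?thesis
      unfolding image_image by (rule directed_has_lub)
  qed
  ultimately have "is_lub_on UNIV (\<preceq>) ((\<lambda>m. m y) ` f ` D) (f s y)"
    using is_lub_on_Wset_iff[of "f ` D"] scott_cont_W_lub_Wset[OF f D s] by blast
  then show ?thesis
    unfolding image_image .
qed

lemma scott_cont_W_has_psum_lub_iff:
  fixes f :: "'i \<Rightarrow> 'x::order \<Rightarrow> 'y \<Rightarrow> 'a"
  assumes f: "\<And>i. i \<in> I \<Longrightarrow> scott_cont_W add z (f i)"
    and D: "directed_set (\<le>) D" and s: "is_lub_on UNIV (\<le>) D s"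
    and g: "\<And>x. x \<in> D \<Longrightarrow> has_psum UNIV (\<preceq>) add z (\<lambda>i. f i x y) I (g x)"
  shows "has_psum UNIV (\<preceq>) add z (\<lambda>i. f i s y) I t \<longleftrightarrow> is_lub_on UNIV (\<preceq>) (g ` D) t"
proof (rule has_psum_lub_interchange[OF D _ _ g])
  show "monotone_on D (\<le>) (\<preceq>) (\<lambda>x. f i x y)" if "i \<in> I" for i
    by (rule monotone_on_subset[OF scott_cont_W_monotone[OF f[OF that]]]) simp
  show "is_lub_on UNIV (\<preceq>) ((\<lambda>x. f i x y) ` D) (f i s y)" if "i \<in> I" for i
    by (rule scott_cont_W_lub[OF f[OF that] D s])
qed

lemma scott_cont_W_has_sumW_iff:
  assumes "\<And>i. i \<in> I \<Longrightarrow> scott_cont_W add z (f i)"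
  shows "has_sumW add z (\<lambda>i. f i x) I m \<longleftrightarrow>
    m \<in> W \<and> (\<forall>y. has_psum UNIV (\<preceq>) add z (\<lambda>i. f i x y) I (m y))"
  by (rule has_sumW_iff) (rule scott_cont_W_in_Wset[OF assms])

lemma has_sumW_lubD:
  fixes f :: "'i \<Rightarrow> 'x::order \<Rightarrow> 'y \<Rightarrow> 'a"
  assumes f: "\<And>i. i \<in> I \<Longrightarrow> scott_cont_W add z (f i)"
    and D: "directed_set (\<le>) D" and s: "is_lub_on UNIV (\<le>) D s"
    and sum: "has_sumW add z (\<lambda>i. f i s) I r"
  shows "\<exists>g. (\<forall>x\<in>D. has_sumW add z (\<lambda>i. f i x) I (g x)) \<and> is_lub_on W (leW add z) (g ` D) r"
proof -
  have r: "r \<in> W" and r_sum: "\<And>y. has_psum UNIV (\<preceq>) add z (\<lambda>i. f i s y) I (r y)"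
    using sum by (simp_all add: scott_cont_W_has_sumW_iff[OF f])
  have "\<exists>t. has_psum UNIV (\<preceq>) add z (\<lambda>i. f i x y) I t" if x: "x \<in> D" for x y
  proof (rule has_psum_exists_if_le[OF r_sum])
    show "f i x y \<preceq> f i s y" if "i \<in> I" for i
      using is_lub_on_upper[OF scott_cont_W_lub[OF f[OF that] D s] imageI[OF x]] .
  qed
  then obtain g where g: "\<And>x y. x \<in> D \<Longrightarrow> has_psum UNIV (\<preceq>) add z (\<lambda>i. f i x y) I (g x y)"
    by metis
  have g_lub: "is_lub_on UNIV (\<preceq>) ((\<lambda>x. g x y) ` D) (r y)" for y
    using scott_cont_W_has_psum_lub_iff[OF f D s g] r_sum by simp
  have g_W: "g x \<in> W" if "x \<in> D" for x
    using Wset_le_closed[OF r] is_lub_on_upper[OF g_lub imageI[OF that]] by simp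
  then have "\<forall>x\<in>D. has_sumW add z (\<lambda>i. f i x) I (g x)"
    using g by (simp add: scott_cont_W_has_sumW_iff[OF f])
  moreover have "is_lub_on W (leW add z) (g ` D) r"
  proof (subst is_lub_on_Wset_iff)
    show "g ` D \<subseteq> W"
      using g_W by auto
    show "\<exists>p. is_lub_on UNIV (\<preceq>) ((\<lambda>m. m y) ` g ` D) p" for y
      using g_lub unfolding image_image by auto
    show "r \<in> W \<and> (\<forall>y. is_lub_on UNIV (\<preceq>) ((\<lambda>m. m y) ` g ` D) (r y))"
      using r g_lub unfolding image_image by simp
  qed
  ultimately show ?thesis
    by auto
qed

lemma has_sumW_lubI:
  fixes f :: "'i \<Rightarrow> 'x::order \<Rightarrow> 'y \<Rightarrow> 'a"
  assumes f: "\<And>i. i \<in> I \<Longrightarrow> scott_cont_W add z (f i)"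
    and D: "directed_set (\<le>) D" and s: "is_lub_on UNIV (\<le>) D s"
    and g_sum: "\<And>x. x \<in> D \<Longrightarrow> has_sumW add z (\<lambda>i. f i x) I (g x)"
    and r: "is_lub_on W (leW add z) (g ` D) r"
  shows "has_sumW add z (\<lambda>i. f i s) I r"
proof -
  have g_W: "g x \<in> W" and g: "has_psum UNIV (\<preceq>) add z (\<lambda>i. f i x y) I (g x y)"
    if "x \<in> D" for x y
    using g_sum[OF that] by (simp_all add: scott_cont_W_has_sumW_iff[OF f])
  have "monotone_on D (\<le>) (\<preceq>) (\<lambda>x. g x y)" for y
  proof (rule monotone_onI)
    fix x x'
    assume "x \<in> D" "x' \<in> D" "x \<le> x'"
    have "f i x y \<preceq> f i x' y" if "i \<in> I" for i
      using monotone_onD[OF scott_cont_W_monotone[OF f[OF that]]] \<open>x \<le> x'\<close> by simp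
    then show "g x y \<preceq> g x' y"
      by (rule has_psum_mono[OF _ g[OF \<open>x \<in> D\<close>] g[OF \<open>x' \<in> D\<close>]])
  qed
  then have lubs: "\<exists>p. is_lub_on UNIV (\<preceq>) ((\<lambda>m. m y) ` g ` D) p" for y
    unfolding image_image by (intro directed_has_lub directed_set_image_monotone[OF D])
  have "g ` D \<subseteq> W"
    using g_W by auto
  then have "r \<in> W" and "is_lub_on UNIV (\<preceq>) ((\<lambda>x. g x y) ` D) (r y)" for y
    using r unfolding is_lub_on_Wset_iff[OF \<open>g ` D \<subseteq> W\<close> lubs] image_image by simp_all
  then show ?thesis
    using scott_cont_W_has_psum_lub_iff[OF f D s g] by (simp add: scott_cont_W_has_sumW_iff[OF f])
qed

theorem has_sumW_lub_iff:
  fixes f :: "'i \<Rightarrow> 'x::order \<Rightarrow> 'y \<Rightarrow> 'a"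
  assumes f: "\<And>i. i \<in> I \<Longrightarrow> scott_cont_W add z (f i)"
    and D: "directed_set (\<le>) D" and s: "is_lub_on UNIV (\<le>) D s"
  shows "has_sumW add z (\<lambda>i. f i s) I r \<longleftrightarrow>
    (\<exists>g. (\<forall>x\<in>D. has_sumW add z (\<lambda>i. f i x) I (g x)) \<and> is_lub_on W (leW add z) (g ` D) r)"
proof
  assume "has_sumW add z (\<lambda>i. f i s) I r"
  from has_sumW_lubD[OF f D s this]
  show "\<exists>g. (\<forall>x\<in>D. has_sumW add z (\<lambda>i. f i x) I (g x)) \<and> is_lub_on W (leW add z) (g ` D) r" .
next
  assume "\<exists>g. (\<forall>x\<in>D. has_sumW add z (\<lambda>i. f i x) I (g x)) \<and> is_lub_on W (leW add z) (g ` D) r"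
  then obtain g where "\<forall>x\<in>D. has_sumW add z (\<lambda>i. f i x) I (g x)" and "is_lub_on W (leW add z) (g ` D) r"
    by blast
  then show "has_sumW add z (\<lambda>i. f i s) I r"
    by (intro has_sumW_lubI[OF f D s]) auto
qed

end

lemma scott_continuous_pcm_if_partial_semiring:
  assumes "partial_semiring add mul z e" and "naturally_ordered add"
    and sc: "scott_continuous_sr add mul"
  shows "scott_continuous_pcm add z"
proof
  show "add u v = add v u" "addopt add (add u v) (Some w) = addopt add (Some u) (add v w)"
    "add z u = Some u" for u v w
    using assms(1) unfolding partial_semiring_def by blast+
  show "nat_le add u v \<Longrightarrow> nat_le add v u \<Longrightarrow> u = v" for u v
    using assms(2) unfolding naturally_ordered_def partial_order_on_def antisym_def by blast
  fix D s y
  assume D: "directed_set (nat_le add) D"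
  then show "\<exists>s. is_lub_on UNIV (nat_le add) D s"
    using sc unfolding scott_continuous_sr_def by blast
  assume s: "is_lub_on UNIV (nat_le add) D s"
  show defined: "add s y \<noteq> None \<longleftrightarrow> (\<forall>x\<in>D. add x y \<noteq> None)"
    using sc D s unfolding scott_continuous_sr_def by blast
  fix t
  assume t: "add s y = Some t"
  then have "is_lub_on UNIV (nat_le add) {the (add x y) | x. x \<in> D} t"
    using sc D s unfolding scott_continuous_sr_def by blast
  moreover have "{the (add x y) | x. x \<in> D} = {c. \<exists>x\<in>D. add x y = Some c}"
    using t defined by force
  ultimately show "is_lub_on UNIV (nat_le add) {c. \<exists>x\<in>D. add x y = Some c} t"
    by simp
qed

(* The top element provided by has_top is not needed. *)
theorem lemmaA1:
  fixes add :: "'a \<Rightarrow> 'a \<Rightarrow> 'a option" and mul :: "'a \<Rightarrow> 'a \<Rightarrow> 'a"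
    and z e :: 'a
    and f :: "'i \<Rightarrow> 'x::order \<Rightarrow> 'y \<Rightarrow> 'a" and I :: "'i set"
    and D :: "'x set" and s :: 'x
  assumes "partial_semiring add mul z e"
    and "naturally_ordered add"
    and "scott_continuous_sr add mul"
    and "has_top add"
    and "\<forall>i\<in>I. scott_cont_W add z (f i)"
    and "directed_set (\<le>) D"
    and "is_lub_on UNIV (\<le>) D s"
  shows "\<forall>r. has_sumW add z (\<lambda>i. f i s) I r \<longleftrightarrow>
           (\<exists>g. (\<forall>x\<in>D. has_sumW add z (\<lambda>i. f i x) I (g x)) \<and>
                is_lub_on (Wset add z) (leW add z) (g ` D) r)"
proof -
  interpret scott_continuous_pcm add z
    using scott_continuous_pcm_if_partial_semiring assms(1-3) .
  have f: "\<And>i. i \<in> I \<Longrightarrow> scott_cont_W add z (f i)"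
    using assms(5) by blast
  show ?thesis
    by (intro allI has_sumW_lub_iff[OF f assms(6,7)])
qed

end
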